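(* Let $S_a=(X_a,X_{a0},X_{aS},U_a,\rightarrow_a,Y_a,H_a)$ and $S_b=(X_b,X_{b0},X_{bS},U_b,\rightarrow_b,Y_b,H_b)$ be metric systems with the same output set $Y_a=Y_b$ and metric $\mathbf{d}$, and let $\varepsilon,\delta\geq 0$. If $S_a\preceq_I^\varepsilon S_b$ and $\varepsilon\leq\delta/2$, then: if $S_b$ is $(\delta-2\varepsilon)$-approximate initial-state opaque, then $S_a$ is $\delta$-approximate initial-state opaque.
   Context: A system $S=(X,X_0,X_S,U,\rightarrow,Y,H)$ has states $X$, initial states $X_0\subseteq X$, secret states $X_S\subseteq X$, inputs $U$, transition relation $\rightarrow\subseteq X\times U\times X$ (write $x\xrightarrow{u}x'$), outputs $Y$ with metric $\mathbf{d}$, output map $H:X\to Y$. For $\delta\ge0$, $S$ is $\delta$-approximate initial-state opaque if for every $x_0\in X_0\cap X_S$ and finite run $x_0\xrightarrow{u_1}x_1\cdots\xrightarrow{u_n}x_n$ there exist $x_0'\in X_0\setminus X_S$ and a run $x_0'\xrightarrow{u_1'}x_1'\cdots\xrightarrow{u_n'}x_n'$ (inputs arbitrary) with $\max_{0\le i\le n}\mathbf{d}(H(x_i),H(x_i'))\le\delta$. An $\varepsilon$-approximate initial-state opacity preserving simulation relation from $S_a$ to $S_b$ is $R\subseteq X_a\times X_b$ such that: (1a) for all $x_{a0}\in X_{a0}\cap X_{aS}$ there is $x_{b0}\in X_{b0}\cap X_{bS}$ with $(x_{a0},x_{b0})\in R$; (1b) for all $x_{b0}\in X_{b0}\setminus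 X_{bS}$ there is $x_{a0}\in X_{a0}\setminus X_{aS}$ with $(x_{a0},x_{b0})\in R$; (2) $\mathbf{d}(H_a(x_a),H_b(x_b))\le\varepsilon$ for all $(x_a,x_b)\in R$; (3) for all $(x_a,x_b)\in R$: (a) for every $x_a\xrightarrow{u_a}_a x_a'$ there is $x_b\xrightarrow{u_b}_b x_b'$ with $(x_a',x_b')\in R$; (b) for every $x_b\xrightarrow{u_b}_b x_b'$ there is $x_a\xrightarrow{u_a}_a x_a'$ with $(x_a',x_b')\in R$. We write $S_a\preceq_I^\varepsilon S_b$ if such an $R$ exists. *)

theory Defs
  imports "HOL-Analysis.Analysis"
begin

text \<open>A system S = (X, X0, XS, U, transitions, Y, H). The output set Y is the
  metric space type 'y (with metric dist); H maps states to outputs.\<close>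

record ('x, 'u, 'y) system =
  states :: "'x set"
  init :: "'x set"
  secret :: "'x set"
  inputs :: "'u set"
  trans :: "('x \<times> 'u \<times> 'x) set"
  out :: "'x \<Rightarrow> 'y"

definition well_formed_system :: "('x, 'u, 'y) system \<Rightarrow> bool" where
  "well_formed_system S \<longleftrightarrow> init S \<subseteq> states S \<and> secret S \<subseteq> states S \<and>
     trans S \<subseteq> states S \<times> inputs S \<times> states S"

definition is_run :: "('x, 'u, 'y) system \<Rightarrow> nat \<Rightarrow> (nat \<Rightarrow> 'x) \<Rightarrow> (nat \<Rightarrow> 'u) \<Rightarrow> bool" where
  "is_run S n xs us \<longleftrightarrow> xs 0 \<in> states S \<and>
     (\<forall>i<n. (xs i, us (Suc i), xs (Suc i)) \<in> trans S)"

definition approx_initial_state_opaque ::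
  "('x, 'u, 'y::metric_space) system \<Rightarrow> real \<Rightarrow> bool" where
  "approx_initial_state_opaque S \<delta> \<longleftrightarrow>
     (\<forall>n xs us. xs 0 \<in> init S \<inter> secret S \<and> is_run S n xs us \<longrightarrow>
        (\<exists>xs' us'. xs' 0 \<in> init S - secret S \<and> is_run S n xs' us' \<and>
           (\<forall>i\<le>n. dist (out S (xs i)) (out S (xs' i)) \<le> \<delta>)))"

definition isop_simulation ::
  "real \<Rightarrow> ('xa, 'ua, 'y::metric_space) system \<Rightarrow> ('xb, 'ub, 'y) system \<Rightarrow> ('xa \<times> 'xb) set \<Rightarrow> bool" where
  "isop_simulation \<epsilon> Sa Sb R \<longleftrightarrow>
     R \<subseteq> states Sa \<times> states Sb \<and>
     (\<forall>xa0 \<in> init Sa \<inter> secret Sa. \<exists>xb0 \<in> init Sb \<inter> secret Sb. (xa0, xb0) \<in> R) \<and>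
     (\<forall>xb0 \<in> init Sb - secret Sb. \<exists>xa0 \<in> init Sa - secret Sa. (xa0, xb0) \<in> R) \<and>
     (\<forall>(xa, xb) \<in> R. dist (out Sa xa) (out Sb xb) \<le> \<epsilon>) \<and>
     (\<forall>(xa, xb) \<in> R.
        (\<forall>ua xa'. (xa, ua, xa') \<in> trans Sa \<longrightarrow>
           (\<exists>ub xb'. (xb, ub, xb') \<in> trans Sb \<and> (xa', xb') \<in> R)) \<and>
        (\<forall>ub xb'. (xb, ub, xb') \<in> trans Sb \<longrightarrow>
           (\<exists>ua xa'. (xa, ua, xa') \<in> trans Sa \<and> (xa', xb') \<in> R)))"

definition isop_simulated ::
  "('xa, 'ua, 'y::metric_space) system \<Rightarrow> real \<Rightarrow> ('xb, 'ub, 'y) system \<Rightarrow> bool" where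
  "isop_simulated Sa \<epsilon> Sb \<longleftrightarrow> (\<exists>R. isop_simulation \<epsilon> Sa Sb R)"

end

theory Submission
  imports Defs
begin

text \<open>A secret run of S_a is matched by a related secret run of S_b (condition 3a), which
  S_b's opacity shadows by a non-secret run within \<delta> - 2\<epsilon>; that run is matched back by a
  non-secret run of S_a (conditions 1b and 3b). Each matching moves outputs by at most \<epsilon>,
  so the triangle inequality gives the bound \<delta>.\<close>

lemma run_lift_along_simulation:
  assumes step: "\<forall>(a, b) \<in> R. \<forall>u a'. (a, u, a') \<in> TA \<longrightarrow>
      (\<exists>v b'. (b, v, b') \<in> TB \<and> (a', b') \<in> R)"
    and related: "(xs 0, y0) \<in> R"
    and run: "\<forall>i<n. (xs i, us (Suc i), xs (Suc i)) \<in> TA"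
  shows "\<exists>ys vs. ys 0 = y0 \<and> (\<forall>i<n. (ys i, vs (Suc i), ys (Suc i)) \<in> TB) \<and>
      (\<forall>i\<le>n. (xs i, ys i) \<in> R)"
  using run
proof (induction n)
  case 0
  show ?case using related by (intro exI[of _ "\<lambda>_. y0"]) auto
next
  case (Suc n)
  then obtain ys vs where ys: "ys 0 = y0" "\<forall>i<n. (ys i, vs (Suc i), ys (Suc i)) \<in> TB"
      "\<forall>i\<le>n. (xs i, ys i) \<in> R"
    by auto
  have "(xs n, ys n) \<in> R" "(xs n, us (Suc n), xs (Suc n)) \<in> TA"
    using ys(3) Suc.prems by auto
  then obtain v y' where y': "(ys n, v, y') \<in> TB" "(xs (Suc n), y') \<in> R"
    using step by fastforce
  show ?case
  proof (intro exI[of _ "ys(Suc n := y')"] exI[of _ "vs(Suc n := v)"] conjI allI impI)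
    show "(ys(Suc n := y')) 0 = y0" using ys(1) by simp
  next
    fix i assume "i < Suc n"
    then show "((ys(Suc n := y')) i, (vs(Suc n := v)) (Suc i), (ys(Suc n := y')) (Suc i)) \<in> TB"
      using ys(2) y'(1) by (cases "i = n") auto
  next
    fix i assume "i \<le> Suc n"
    then show "(xs i, (ys(Suc n := y')) i) \<in> R"
      using ys(3) y'(2) by (cases "i = Suc n") auto
  qed
qed

lemma isop_simulation_run_forward:
  assumes sim: "isop_simulation \<epsilon> Sa Sb R"
    and run: "is_run Sa n xs us" and related: "(xs 0, y0) \<in> R"
  shows "\<exists>ys vs. ys 0 = y0 \<and> is_run Sb n ys vs \<and> (\<forall>i\<le>n. (xs i, ys i) \<in> R)"
proof -
  have step: "\<forall>(a, b) \<in> R. \<forall>u a'. (a, u, a') \<in> trans Sa \<longrightarrow>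
      (\<exists>v b'. (b, v, b') \<in> trans Sb \<and> (a', b') \<in> R)"
    using sim unfolding isop_simulation_def by blast
  obtain ys vs where ys: "ys 0 = y0" "\<forall>i<n. (ys i, vs (Suc i), ys (Suc i)) \<in> trans Sb"
      "\<forall>i\<le>n. (xs i, ys i) \<in> R"
    using run_lift_along_simulation[where xs = xs, OF step related] run unfolding is_run_def by blast
  have "y0 \<in> states Sb" using sim related unfolding isop_simulation_def by blast
  with ys show ?thesis unfolding is_run_def by blast
qed

lemma isop_simulation_run_backward:
  assumes sim: "isop_simulation \<epsilon> Sa Sb R"
    and run: "is_run Sb n ys vs" and related: "(x0, ys 0) \<in> R"
  shows "\<exists>xs us. xs 0 = x0 \<and> is_run Sa n xs us \<and> (\<forall>i\<le>n. (xs i, ys i) \<in> R)"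
proof -
  have step: "\<forall>(b, a) \<in> R\<inverse>. \<forall>v b'. (b, v, b') \<in> trans Sb \<longrightarrow>
      (\<exists>u a'. (a, u, a') \<in> trans Sa \<and> (b', a') \<in> R\<inverse>)"
    using sim unfolding isop_simulation_def by blast
  obtain xs us where xs: "xs 0 = x0" "\<forall>i<n. (xs i, us (Suc i), xs (Suc i)) \<in> trans Sa"
      "\<forall>i\<le>n. (ys i, xs i) \<in> R\<inverse>"
    using run_lift_along_simulation[of "R\<inverse>" "trans Sb" "trans Sa" ys x0 n vs, OF step]
      related run unfolding is_run_def by blast
  have "x0 \<in> states Sa" using sim related unfolding isop_simulation_def by blast
  with xs show ?thesis unfolding is_run_def by auto
qed

lemma dist_triangle3:
  fixes a a' b b' :: "'a::metric_space"
  shows "dist a a' \<le> dist a b + dist b b' + dist a' b'"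
  by (metis add.commute add_left_mono dist_commute dist_triangle order_trans)

lemma isop_simulation_transfers_opacity:
  assumes sim: "isop_simulation \<epsilon> Sa Sb R"
    and opaque: "approx_initial_state_opaque Sb \<delta>"
  shows "approx_initial_state_opaque Sa (\<delta> + 2 * \<epsilon>)"
  unfolding approx_initial_state_opaque_def
proof (intro allI impI)
  fix n xs us
  assume secret_run: "xs 0 \<in> init Sa \<inter> secret Sa \<and> is_run Sa n xs us"
  then obtain y0 where y0: "y0 \<in> init Sb \<inter> secret Sb" "(xs 0, y0) \<in> R"
    using sim unfolding isop_simulation_def by blast
  obtain ys vs where ys: "ys 0 = y0" "is_run Sb n ys vs" "\<forall>i\<le>n. (xs i, ys i) \<in> R"
    using secret_run isop_simulation_run_forward[where xs = xs, OF sim _ y0(2)] by blast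
  obtain ys' vs' where ys': "ys' 0 \<in> init Sb - secret Sb" "is_run Sb n ys' vs'"
      "\<forall>i\<le>n. dist (out Sb (ys i)) (out Sb (ys' i)) \<le> \<delta>"
    using opaque y0(1) ys(1,2) unfolding approx_initial_state_opaque_def by blast
  obtain x0 where x0: "x0 \<in> init Sa - secret Sa" "(x0, ys' 0) \<in> R"
    using sim ys'(1) unfolding isop_simulation_def by blast
  obtain xs' us' where xs': "xs' 0 = x0" "is_run Sa n xs' us'" "\<forall>i\<le>n. (xs' i, ys' i) \<in> R"
    using isop_simulation_run_backward[OF sim ys'(2) x0(2)] by blast
  have close: "dist (out Sa a) (out Sb b) \<le> \<epsilon>" if "(a, b) \<in> R" for a b
    using sim that unfolding isop_simulation_def by blast
  have "dist (out Sa (xs i)) (out Sa (xs' i)) \<le> \<delta> + 2 * \<epsilon>" if "i \<le> n" for i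
    using dist_triangle3[of "out Sa (xs i)" "out Sa (xs' i)" "out Sb (ys i)" "out Sb (ys' i)"]
      close[of "xs i" "ys i"] close[of "xs' i" "ys' i"] ys(3) ys'(3) xs'(3) that
    by fastforce
  then show "\<exists>xs' us'. xs' 0 \<in> init Sa - secret Sa \<and> is_run Sa n xs' us' \<and>
      (\<forall>i\<le>n. dist (out Sa (xs i)) (out Sa (xs' i)) \<le> \<delta> + 2 * \<epsilon>)"
    using x0(1) xs'(1,2) by blast
qed

theorem mainTheorem5:
  fixes Sa :: "('xa, 'ua, 'y::metric_space) system"
    and Sb :: "('xb, 'ub, 'y) system"
    and \<epsilon> \<delta> :: real
  assumes "well_formed_system Sa" and "well_formed_system Sb"
    and "\<epsilon> \<ge> 0" and "\<delta> \<ge> 0"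
    and "isop_simulated Sa \<epsilon> Sb"
    and "\<epsilon> \<le> \<delta> / 2"
    and "approx_initial_state_opaque Sb (\<delta> - 2 * \<epsilon>)"
  shows "approx_initial_state_opaque Sa \<delta>"
proof -
  obtain R where "isop_simulation \<epsilon> Sa Sb R"
    using assms(5) unfolding isop_simulated_def by blast
  from isop_simulation_transfers_opacity[OF this assms(7)] show ?thesis by simp
qed

end
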